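(* Let $m\ge2$ and work either in the PNS or in the PNGS setting described in the context. Let $\mathbb S^m\supset p^{m-1}\supset\cdots\supset p^1\supset p^0$ be a family of backward nested subspheres, i.e. $p^{l}\in P_l$ for $l=0,\ldots,m-1$, $p^{m-1}\in S_{\mathbb S^m}$ and $p^{l-1}\in S_{p^l}$ for $l=1,\ldots,m-1$. Then for all $0\le j'<j\le m-1$, $$\pi_{p^j,p^{j'}}\circ\pi_{\mathbb S^m,p^j}=\pi_{\mathbb S^m,p^{j'}}$$ (at every point of $\mathbb S^m$ where these maps are defined).
   Context: Notation: $\|\cdot\|$ Euclidean/Frobenius norm; $O(k,n)=\{v\in\mathbb R^{n\times k}:v^Tv=I_k\}$; $O(k)$ orthogonal group; $\mathbb D^k$ open unit ball and $\mathbb S^{k-1}$ unit sphere in $\mathbb R^k$. For $j\in\{1,\ldots,m-1\}$, PNS: $M_j=\{\binom{v}{\alpha^T}: v\in O(m-j,m+1),\alpha\in\mathbb D^{m-j}\}$; PNGS: same with $\alpha=0$. For $j=0$: $M_0=\{\binom{v}{\alpha^T}: v\in O(m,m+1),\alpha\in\mathbb S^{m-1}\}$. $P_j=M_j/O(m-j)$ (right action $z\mapsto zR$), with orbits $[z]$. An element $[\binom{v}{\alpha^T}]\in P_j$, $j\ge1$, represents the $j$-dimensional subsphere $\{x\in\mathbb S^m: v^Tx=\alpha\}$, and for $j=0$ the point $v\alpha$. $P_m=\{\mathbb S^m\}$ and $S_{\mathbb S^m}=P_{m-1}$. Nesting: for $p=[\binom{v}{\alpha^T}]\in P_j$ with $2\le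 j\le m-1$, $S_p$ is the set of all $[\binom{v\ \ v_{m-j+1}}{\alpha^T\ \ \alpha_{m-j+1}}]$ with $v_{m-j+1}\in\mathbb S^m$, $v^Tv_{m-j+1}=0$ and $\alpha_{m-j+1}\in\mathbb R$, $\alpha_{m-j+1}^2<1-\|\alpha\|^2$ (PNS) resp. $\alpha_{m-j+1}=0$ (PNGS); for $j=1$ the same with the condition $\alpha_m^2=1-\|\alpha\|^2$ instead. Projection onto $p=[\binom{v}{\alpha^T}]\in P_j$ ($0\le j\le m-1$): $\pi_{\mathbb S^m,p}(q)=v\alpha+\sqrt{1-\|\alpha\|^2}\,\frac{(I_{m+1}-vv^T)q}{\|(I_{m+1}-vv^T)q\|}$, defined whenever $(I_{m+1}-vv^T)q\neq0$ and independent of the representative (for $j=0$ this is the constant $v\alpha$). The same definitions with $m$ replaced by any $j$ give subspheres and projections $\pi_{\mathbb S^j,\cdot}$ for $\mathbb S^j\subset\mathbb R^{j+1}$. For $p^j=[\binom{v}{\alpha^T}]\in P_j$ choose $\tilde v\in O(j+1,m+1)$ with $(v,\tilde v)\in O(m+1)$ and define $g_{p^j,\mathbb S^j}:p^j\to\mathbb S^j$, $y\mapsto \tilde v^Ty/\|\tilde v^Ty\|$, a bijection with inverse $z\mapsto v\alpha+\sqrt{1-\|\alpha\|^2}\,\tilde vz$. For a subsphere $p^{j'}\subset p^j$ of the nested family, $p'_{j'}:=g_{p^j,\mathbb S^j}(p^{j'})$ is a $j'$-dimensional subsphere of $\mathbb S^j$, and $\pi_{p^j,p^{j'}}:=g_{p^j,\mathbb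 S^j}^{-1}\circ\pi_{\mathbb S^j,p'_{j'}}\circ g_{p^j,\mathbb S^j}:p^j\to p^{j'}$ (independent of the choice of $\tilde v$). *)

theory Defs
  imports Complex_Main
begin

text \<open>Vectors of R^n are represented as functions nat => real vanishing at
  indices >= n (dimension varies inside the statement: R^(m+1) and R^(j+1)).
  A matrix in R^(n x k) is a family of k column vectors (nat => vec), with
  columns of index >= k set to zero.  A representative z = (v, alpha) of an
  element of M_j stands for the (n+1) x k matrix (v ; alpha^T).\<close>

type_synonym vec = "nat \<Rightarrow> real"
type_synonym rep = "(nat \<Rightarrow> vec) \<times> (nat \<Rightarrow> real)"

definition inR :: "nat \<Rightarrow> vec \<Rightarrow> bool" where
  "inR n x \<longleftrightarrow> (\<forall>i\<ge>n. x i = 0)"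

definition dot :: "nat \<Rightarrow> vec \<Rightarrow> vec \<Rightarrow> real" where
  "dot n x y = (\<Sum>i<n. x i * y i)"

definition vnorm :: "nat \<Rightarrow> vec \<Rightarrow> real" where
  "vnorm n x = sqrt (dot n x x)"

definition Sph :: "nat \<Rightarrow> vec set" where
  "Sph d = {x. inR (Suc d) x \<and> dot (Suc d) x x = 1}"

definition sqn :: "nat \<Rightarrow> (nat \<Rightarrow> real) \<Rightarrow> real" where
  "sqn k a = (\<Sum>i<k. (a i)^2)"

definition Ost :: "nat \<Rightarrow> nat \<Rightarrow> (nat \<Rightarrow> vec) set" where
  "Ost k n = {v. (\<forall>a<k. inR n (v a)) \<and>
                 (\<forall>a<k. \<forall>b<k. dot n (v a) (v b) = (if a = b then 1 else 0)) \<and>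
                 (\<forall>a\<ge>k. v a = (\<lambda>_. 0))}"

definition Og :: "nat \<Rightarrow> (nat \<Rightarrow> nat \<Rightarrow> real) set" where
  "Og k = {R. (\<forall>a<k. \<forall>b<k. (\<Sum>c<k. R c a * R c b) = (if a = b then 1 else 0)) \<and>
              (\<forall>a b. (k \<le> a \<or> k \<le> b) \<longrightarrow> R a b = 0)}"

definition lin :: "(nat \<Rightarrow> vec) \<Rightarrow> (nat \<Rightarrow> real) \<Rightarrow> nat \<Rightarrow> vec" where
  "lin v c k = (\<lambda>i. \<Sum>a<k. c a * v a i)"

definition act :: "nat \<Rightarrow> rep \<Rightarrow> (nat \<Rightarrow> nat \<Rightarrow> real) \<Rightarrow> rep" where
  "act k z R = (\<lambda>b. if b < k then lin (fst z) (\<lambda>a. R a b) k else (\<lambda>_. 0),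
                \<lambda>b. if b < k then (\<Sum>a<k. snd z a * R a b) else 0)"

definition orbit :: "nat \<Rightarrow> rep \<Rightarrow> rep set" where
  "orbit k z = {act k z R | R. R \<in> Og k}"

text \<open>M_j for the sphere S^d (k = d - j columns); geo = True is the PNGS
  setting, geo = False the PNS setting.\<close>
definition Mset :: "bool \<Rightarrow> nat \<Rightarrow> nat \<Rightarrow> rep set" where
  "Mset geo d j = {(v, \<alpha>). v \<in> Ost (d - j) (Suc d) \<and> (\<forall>a\<ge>d - j. \<alpha> a = 0) \<and>
      (if j = 0 then sqn (d - j) \<alpha> = 1
       else if geo then (\<forall>a. \<alpha> a = 0) else sqn (d - j) \<alpha> < 1)}"

definition Pset :: "bool \<Rightarrow> nat \<Rightarrow> nat \<Rightarrow> rep set set" where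
  "Pset geo d j = (\<lambda>z. orbit (d - j) z) ` Mset geo d j"

definition rep_of :: "rep set \<Rightarrow> rep" where
  "rep_of p = (SOME z. z \<in> p)"

definition subsph :: "nat \<Rightarrow> nat \<Rightarrow> rep \<Rightarrow> vec set" where
  "subsph d j z = (if j = 0 then {lin (fst z) (snd z) d}
     else {x \<in> Sph d. \<forall>a<d - j. dot (Suc d) (fst z a) x = snd z a})"

definition subsphP :: "nat \<Rightarrow> nat \<Rightarrow> rep set \<Rightarrow> vec set" where
  "subsphP d j p = subsph d j (rep_of p)"

definition residual :: "nat \<Rightarrow> nat \<Rightarrow> (nat \<Rightarrow> vec) \<Rightarrow> vec \<Rightarrow> vec" where
  "residual d k v q = (\<lambda>i. q i - (\<Sum>a<k. dot (Suc d) (v a) q * v a i))"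

definition proj :: "nat \<Rightarrow> nat \<Rightarrow> rep \<Rightarrow> vec \<Rightarrow> vec" where
  "proj d j z q = (\<lambda>i. lin (fst z) (snd z) (d - j) i +
      sqrt (1 - sqn (d - j) (snd z)) * residual d (d - j) (fst z) q i /
        vnorm (Suc d) (residual d (d - j) (fst z) q))"

text \<open>Domain of definition (for j = 0 the projection is the constant v alpha).\<close>
definition proj_ok :: "nat \<Rightarrow> nat \<Rightarrow> rep \<Rightarrow> vec \<Rightarrow> bool" where
  "proj_ok d j z q \<longleftrightarrow> j = 0 \<or> vnorm (Suc d) (residual d (d - j) (fst z) q) \<noteq> 0"

definition projP :: "nat \<Rightarrow> nat \<Rightarrow> rep set \<Rightarrow> vec \<Rightarrow> vec" where
  "projP d j p q = proj d j (rep_of p) q"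

definition projP_ok :: "nat \<Rightarrow> nat \<Rightarrow> rep set \<Rightarrow> vec \<Rightarrow> bool" where
  "projP_ok d j p q \<longleftrightarrow> proj_ok d j (rep_of p) q"

definition children :: "bool \<Rightarrow> nat \<Rightarrow> nat \<Rightarrow> rep set \<Rightarrow> rep set set" where
  "children geo m j p =
     {orbit (Suc (m - j)) ((fst z)(m - j := w), (snd z)(m - j := b)) | z w b.
        z \<in> p \<and> w \<in> Sph m \<and> (\<forall>a<m - j. dot (Suc m) (fst z a) w = 0) \<and>
        (if j = 1 then b^2 = 1 - sqn (m - j) (snd z)
         else if geo then b = 0 else b^2 < 1 - sqn (m - j) (snd z))}"

definition children_top :: "bool \<Rightarrow> nat \<Rightarrow> rep set set" where
  "children_top geo m = Pset geo m (m - 1)"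

definition complement :: "nat \<Rightarrow> nat \<Rightarrow> (nat \<Rightarrow> vec) \<Rightarrow> (nat \<Rightarrow> vec)" where
  "complement m j v = (SOME vt. vt \<in> Ost (Suc j) (Suc m) \<and>
      (\<lambda>a. if a < m - j then v a else vt (a - (m - j))) \<in> Ost (Suc m) (Suc m))"

definition tmul :: "nat \<Rightarrow> nat \<Rightarrow> (nat \<Rightarrow> vec) \<Rightarrow> vec \<Rightarrow> vec" where
  "tmul m j vt y = (\<lambda>c. if c < Suc j then dot (Suc m) (vt c) y else 0)"

definition gmap :: "nat \<Rightarrow> nat \<Rightarrow> rep set \<Rightarrow> vec \<Rightarrow> vec" where
  "gmap m j p y = (let vt = complement m j (fst (rep_of p)) in
      (\<lambda>c. tmul m j vt y c / vnorm (Suc j) (tmul m j vt y)))"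

definition gmap_ok :: "nat \<Rightarrow> nat \<Rightarrow> rep set \<Rightarrow> vec \<Rightarrow> bool" where
  "gmap_ok m j p y \<longleftrightarrow> vnorm (Suc j) (tmul m j (complement m j (fst (rep_of p))) y) \<noteq> 0"

definition ginv :: "nat \<Rightarrow> nat \<Rightarrow> rep set \<Rightarrow> vec \<Rightarrow> vec" where
  "ginv m j p x = (let z = rep_of p; vt = complement m j (fst z) in
      (\<lambda>i. lin (fst z) (snd z) (m - j) i +
           sqrt (1 - sqn (m - j) (snd z)) * lin vt x (Suc j) i))"

definition image_class :: "bool \<Rightarrow> nat \<Rightarrow> nat \<Rightarrow> nat \<Rightarrow> rep set \<Rightarrow> rep set \<Rightarrow> rep set" where
  "image_class geo m j j' pj pj' =
     (SOME P'. P' \<in> Pset geo j j' \<and> subsphP j j' P' = gmap m j pj ` subsphP m j' pj')"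

definition pi_btw :: "bool \<Rightarrow> nat \<Rightarrow> nat \<Rightarrow> nat \<Rightarrow> rep set \<Rightarrow> rep set \<Rightarrow> vec \<Rightarrow> vec" where
  "pi_btw geo m j j' pj pj' y =
     ginv m j pj (projP j j' (image_class geo m j j' pj pj') (gmap m j pj y))"

definition pi_btw_ok :: "bool \<Rightarrow> nat \<Rightarrow> nat \<Rightarrow> nat \<Rightarrow> rep set \<Rightarrow> rep set \<Rightarrow> vec \<Rightarrow> bool" where
  "pi_btw_ok geo m j j' pj pj' y \<longleftrightarrow> gmap_ok m j pj y \<and>
     projP_ok j j' (image_class geo m j j' pj pj') (gmap m j pj y)"

end

theory Submission
  imports Defs
begin

text \<open>Orthogonal projection onto a subsphere {x \<in> S^m. v^T x = \<alpha>} sends q to the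
  unique maximiser of the inner product with q over the subsphere. The nested subsphere
  p^j' is cut out of p^j by further equations w^T x = \<beta> with orthonormal w orthogonal
  to v, so the chart g = g_{p^j,S^j}, which scales inner products on p^j affinely,
  maps it onto a j'-subsphere of S^j. For y the projection of q onto p^j, the inner
  product of g y and g x is an increasing affine function of the inner product of q
  and x on p^j; hence maximising over g(p^j') and maximising over p^j' pick
  corresponding points, which is the claimed identity.\<close>

section \<open>Inner products and orthonormal frames\<close>

lemma dot_commute: "dot n x y = dot n y x"
  by (simp add: dot_def mult.commute)

lemma dot_lin_right: "dot n x (lin V f k) = (\<Sum>a<k. f a * dot n x (V a))"
  unfolding dot_def lin_def
  by (simp add: sum_distrib_left mult.left_commute, rule sum.swap)

lemma dot_lin_left: "dot n (lin V f k) x = (\<Sum>a<k. f a * dot n (V a) x)"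
  using dot_lin_right[of n x V f k] by (simp add: dot_commute)

lemma dot_add_right: "dot n x (\<lambda>i. y i + z i) = dot n x y + dot n x z"
  by (simp add: dot_def distrib_left sum.distrib)

lemma dot_add_left: "dot n (\<lambda>i. y i + z i) x = dot n y x + dot n z x"
  by (simp add: dot_def distrib_right sum.distrib)

lemma dot_diff_right: "dot n x (\<lambda>i. y i - z i) = dot n x y - dot n x z"
  by (simp add: dot_def right_diff_distrib sum_subtractf)

lemma dot_diff_left: "dot n (\<lambda>i. y i - z i) x = dot n y x - dot n z x"
  by (simp add: dot_def left_diff_distrib sum_subtractf)

lemma dot_scale_right: "dot n x (\<lambda>i. c * y i) = c * dot n x y"
  by (simp add: dot_def sum_distrib_left mult.left_commute)

lemma dot_scale_left: "dot n (\<lambda>i. c * y i) x = c * dot n y x"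
  by (simp add: dot_def sum_distrib_left mult.assoc)

lemma dot_divide_right: "dot n x (\<lambda>i. y i / c) = dot n x y / c"
  by (simp add: dot_def sum_divide_distrib)

lemma dot_divide_left: "dot n (\<lambda>i. y i / c) x = dot n y x / c"
  by (simp add: dot_def sum_divide_distrib)

lemma dot_self_nonneg: "dot n x x \<ge> 0"
  by (simp add: dot_def sum_nonneg)

lemma dot_self_eq_0D:
  assumes "dot n x x = 0" "i < n"
  shows "x i = 0"
proof -
  have "(\<Sum>i<n. x i * x i) = 0" using assms(1) by (simp add: dot_def)
  then have "\<forall>i\<in>{..<n}. x i * x i = 0" by (subst sum_nonneg_eq_0_iff[symmetric]) auto
  then show ?thesis using assms(2) by auto
qed

lemma inR_eqI:
  assumes "inR n x" "inR n y" "dot n (\<lambda>i. x i - y i) (\<lambda>i. x i - y i) = 0"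
  shows "x = y"
proof
  fix i show "x i = y i"
    using assms dot_self_eq_0D[OF assms(3), of i] by (cases "i < n") (auto simp: inR_def)
qed

lemma inR_lin: "(\<And>a. a < k \<Longrightarrow> inR n (V a)) \<Longrightarrow> inR n (lin V f k)"
  by (simp add: inR_def lin_def)

lemma sqn_eq_dot: "sqn k a = dot k a a"
  by (simp add: sqn_def dot_def power2_eq_square)

lemma sqn_nonneg: "sqn k a \<ge> 0"
  by (simp add: sqn_def sum_nonneg)

lemma sqn_divide: "sqn k (\<lambda>i. a i / c) = sqn k a / c^2"
  by (simp add: sqn_def power_divide sum_divide_distrib)

lemma sqn_fun_upd: "sqn (Suc k) (f(k := b)) = sqn k f + b^2"
proof -
  have "(\<Sum>i<k. ((f(k := b)) i)^2) = (\<Sum>i<k. (f i)^2)" by (rule sum.cong) auto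
  then show ?thesis by (simp add: sqn_def)
qed

abbreviation lin_eqs :: "nat \<Rightarrow> nat \<Rightarrow> (nat \<Rightarrow> vec) \<Rightarrow> (nat \<Rightarrow> real) \<Rightarrow> vec \<Rightarrow> bool" where
  "lin_eqs n k V \<beta> x \<equiv> \<forall>a<k. dot n (V a) x = \<beta> a"

lemma lin_eqs_fun_upd:
  "lin_eqs n (Suc k) (V(k := w)) (\<gamma>(k := b)) x \<longleftrightarrow> lin_eqs n k V \<gamma> x \<and> dot n w x = b"
  by (auto simp: less_Suc_eq)

lemma lin_eqs_homogeneous_iff:
  assumes eq: "\<And>x. lin_eqs n k V \<alpha> x \<longleftrightarrow> lin_eqs n k1 V1 \<alpha>1 x \<and> lin_eqs n k2 V2 \<alpha>2 x"
    and x0: "lin_eqs n k V \<alpha> x0"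
  shows "lin_eqs n k V (\<lambda>_. 0) u \<longleftrightarrow> lin_eqs n k1 V1 (\<lambda>_. 0) u \<and> lin_eqs n k2 V2 (\<lambda>_. 0) u"
proof -
  have shift: "lin_eqs n l U \<gamma> (\<lambda>i. x0 i + u i) \<longleftrightarrow> lin_eqs n l U (\<lambda>_. 0) u"
    if "lin_eqs n l U \<gamma> x0" for l U \<gamma>
    using that by (simp add: dot_add_right)
  have "lin_eqs n k1 V1 \<alpha>1 x0" "lin_eqs n k2 V2 \<alpha>2 x0" using eq x0 by blast+
  then show ?thesis
    using eq[of "\<lambda>i. x0 i + u i"] shift[OF x0] shift[of k1 V1 \<alpha>1] shift[of k2 V2 \<alpha>2] by simp
qed

lemma Ost_dot:
  "V \<in> Ost k n \<Longrightarrow> a < k \<Longrightarrow> b < k \<Longrightarrow> dot n (V a) (V b) = (if a = b then 1 else 0)"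
  by (simp add: Ost_def)

lemma Ost_inR: "V \<in> Ost k n \<Longrightarrow> a < k \<Longrightarrow> inR n (V a)"
  by (simp add: Ost_def)

lemma Ost_dot_lin:
  assumes V: "V \<in> Ost k n" and b: "b < k"
  shows "dot n (V b) (lin V f k) = f b"
proof -
  have "(\<Sum>a<k. f a * dot n (V b) (V a)) = (\<Sum>a<k. if a = b then f a else 0)"
    by (rule sum.cong) (use Ost_dot[OF V] b in auto)
  then show ?thesis using b by (simp add: dot_lin_right)
qed

lemma Ost_lin_lin: "V \<in> Ost k n \<Longrightarrow> dot n (lin V f k) (lin V g k) = (\<Sum>a<k. f a * g a)"
  by (simp add: dot_lin_left Ost_dot_lin)

lemma Ost_bessel:
  fixes x :: vec
  assumes "V \<in> Ost k n"
  defines "r \<equiv> \<lambda>i. x i - lin V (\<lambda>a. dot n (V a) x) k i"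
  shows "dot n r r = dot n x x - (\<Sum>a<k. (dot n (V a) x)^2)"
proof -
  have l: "dot n (lin V (\<lambda>a. dot n (V a) x) k) x = (\<Sum>a<k. (dot n (V a) x)^2)"
    by (simp add: dot_lin_left power2_eq_square)
  then have r: "dot n x (lin V (\<lambda>a. dot n (V a) x) k) = (\<Sum>a<k. (dot n (V a) x)^2)"
    by (simp only: dot_commute)
  show ?thesis
    unfolding r_def
    by (simp only: dot_diff_left dot_diff_right Ost_lin_lin[OF assms(1)] l r
        power2_eq_square[symmetric])
qed

definition unit_vec :: "nat \<Rightarrow> vec" where
  "unit_vec i = (\<lambda>t. if t = i then 1 else 0)"

lemma dot_unit_vec_right: "i < n \<Longrightarrow> dot n x (unit_vec i) = x i"
  by (simp add: dot_def unit_vec_def if_distrib cong: if_cong)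

lemma Ost_bessel_unit_vec:
  fixes i :: nat
  assumes "V \<in> Ost k n" "i < n"
  defines "r \<equiv> \<lambda>t. unit_vec i t - lin V (\<lambda>a. dot n (V a) (unit_vec i)) k t"
  shows "dot n r r = 1 - (\<Sum>a<k. (V a i)^2)"
  using Ost_bessel[OF assms(1), of "unit_vec i"] assms(2)
  by (simp add: r_def dot_unit_vec_right) (simp add: unit_vec_def)

lemma Ost_sum_sq_entries:
  assumes "V \<in> Ost k n"
  shows "(\<Sum>i<n. \<Sum>a<k. (V a i)^2) = real k"
proof -
  have "(\<Sum>i<n. \<Sum>a<k. (V a i)^2) = (\<Sum>a<k. dot n (V a) (V a))"
    by (subst sum.swap) (simp add: dot_def power2_eq_square)
  also have "\<dots> = (\<Sum>a<k. 1)"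
    by (rule sum.cong) (simp_all add: Ost_dot[OF assms])
  finally show ?thesis by simp
qed

lemma Ost_fun_upd:
  assumes V: "V \<in> Ost k n" and w: "inR n w" "dot n w w = 1" "\<forall>a<k. dot n (V a) w = 0"
  shows "V(k := w) \<in> Ost (Suc k) n"
proof -
  have wV: "dot n w (V a) = 0" if "a < k" for a
    using w(3) that dot_commute by metis
  have "dot n ((V(k := w)) a) ((V(k := w)) b) = (if a = b then 1 else 0)"
    if "a < Suc k" "b < Suc k" for a b
    using that Ost_dot[OF V] w(2,3) wV by (cases "a = k"; cases "b = k") auto
  then show ?thesis using V w(1) by (auto simp: Ost_def)
qed

lemma Ost_orthogonal_unit_exists:
  assumes V: "V \<in> Ost k n" and kn: "k < n"
  obtains w where "inR n w" "dot n w w = 1" "\<forall>a<k. dot n (V a) w = 0"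
proof -
  define r where "r i = (\<lambda>t. unit_vec i t - lin V (\<lambda>a. dot n (V a) (unit_vec i)) k t)" for i
  have "\<exists>i<n. dot n (r i) (r i) > 0"
  proof (rule ccontr)
    assume "\<not> ?thesis"
    then have "1 \<le> (\<Sum>a<k. (V a i)^2)" if "i < n" for i
      using Ost_bessel_unit_vec[OF V that] that unfolding r_def by fastforce
    then have "(\<Sum>i<n. 1) \<le> (\<Sum>i<n. \<Sum>a<k. (V a i)^2)"
      by (intro sum_mono) auto
    then show False using Ost_sum_sq_entries[OF V] kn by simp
  qed
  then obtain i where i: "i < n" and pos: "dot n (r i) (r i) > 0" by auto
  define w where "w = (\<lambda>t. r i t / sqrt (dot n (r i) (r i)))"
  have "inR n w"
    using V i unfolding w_def r_def inR_def unit_vec_def lin_def Ost_def by auto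
  moreover have "dot n w w = 1"
    using pos unfolding w_def by (simp add: dot_divide_left dot_divide_right)
  moreover have "\<forall>a<k. dot n (V a) w = 0"
    using i unfolding w_def r_def
    by (simp add: dot_divide_right dot_diff_right Ost_dot_lin[OF V] dot_unit_vec_right)
  ultimately show thesis by (rule that)
qed

text \<open>By Bessel every row of a square orthonormal matrix has squared norm at most 1,
  while the squared norms of all rows add up to n; so the Bessel residual of every
  unit vector vanishes.\<close>

lemma Ost_square_rows:
  assumes V: "V \<in> Ost n n" and i: "i < n" and t: "t < n"
  shows "(\<Sum>a<n. V a i * V a t) = (if i = t then 1 else 0)"
proof -
  define r where "r = (\<lambda>t. unit_vec i t - lin V (\<lambda>a. dot n (V a) (unit_vec i)) n t)"
  have nonneg: "0 \<le> 1 - (\<Sum>a<n. (V a i)^2)" if "i < n" for i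
    using Ost_bessel_unit_vec[OF V that] dot_self_nonneg by metis
  have "(\<Sum>i<n. 1 - (\<Sum>a<n. (V a i)^2)) = 0"
    using Ost_sum_sq_entries[OF V] by (simp add: sum_subtractf)
  then have "\<forall>i\<in>{..<n}. 1 - (\<Sum>a<n. (V a i)^2) = 0"
    by (subst sum_nonneg_eq_0_iff[symmetric]) (use nonneg in auto)
  then have "dot n r r = 0" using Ost_bessel_unit_vec[OF V i] i unfolding r_def by simp
  then have "r t = 0" using dot_self_eq_0D t by blast
  then have "unit_vec i t = (\<Sum>a<n. V a i * V a t)"
    using i unfolding r_def lin_def by (simp add: dot_unit_vec_right mult.commute)
  then show ?thesis by (cases "i = t") (simp_all add: unit_vec_def)
qed

lemma Ost_square_expansion:
  assumes V: "V \<in> Ost n n" and x: "inR n x"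
  shows "x t = (\<Sum>a<n. dot n (V a) x * V a t)"
proof (cases "t < n")
  case False
  then show ?thesis using x V by (simp add: inR_def Ost_def)
next
  case True
  have "(\<Sum>a<n. dot n (V a) x * V a t) = (\<Sum>i<n. x i * (\<Sum>a<n. V a i * V a t))"
    unfolding dot_def sum_distrib_left sum_distrib_right by (subst sum.swap) (simp add: mult_ac)
  also have "\<dots> = x t"
    using True by (simp add: Ost_square_rows[OF V _ True] if_distrib cong: if_cong)
  finally show ?thesis by simp
qed

lemma Ost_square_parseval:
  assumes V: "V \<in> Ost n n" and x: "inR n x"
  shows "dot n x y = (\<Sum>a<n. dot n (V a) x * dot n (V a) y)"
proof -
  have "x = lin V (\<lambda>a. dot n (V a) x) n"
    unfolding lin_def using Ost_square_expansion[OF V x] by (auto simp: mult.commute)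
  then have "dot n x y = dot n (lin V (\<lambda>a. dot n (V a) x) n) y" by simp
  then show ?thesis by (simp add: dot_lin_left)
qed

lemma Ost_completion_exists:
  assumes v: "v \<in> Ost k n" and "k + e \<le> n"
  shows "\<exists>vt. vt \<in> Ost e n \<and> (\<lambda>a. if a < k then v a else vt (a - k)) \<in> Ost (k + e) n"
  using assms(2)
proof (induction e)
  case 0
  have "(\<lambda>a. if a < k then v a else (\<lambda>_ _. 0::real) (a - k)) = v"
    using v by (auto simp: Ost_def)
  moreover have "(\<lambda>_ _. 0::real) \<in> Ost 0 n" by (simp add: Ost_def)
  ultimately show ?case using v by auto
next
  case (Suc e)
  then obtain vt where vt: "vt \<in> Ost e n"
    and joint: "(\<lambda>a. if a < k then v a else vt (a - k)) \<in> Ost (k + e) n" (is "?J \<in> _")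
    by auto
  obtain w where w: "inR n w" "dot n w w = 1" "\<forall>a<k + e. dot n (?J a) w = 0"
    using Ost_orthogonal_unit_exists[OF joint] Suc.prems by auto
  have "dot n (vt a) w = 0" if "a < e" for a
    using w(3)[rule_format, of "k + a"] that by simp
  then have vt': "vt(e := w) \<in> Ost (Suc e) n" by (simp add: Ost_fun_upd[OF vt w(1,2)])
  have "(\<lambda>a. if a < k then v a else (vt(e := w)) (a - k)) = ?J(k + e := w)"
    by (auto simp: fun_eq_iff)
  moreover have "?J(k + e := w) \<in> Ost (Suc (k + e)) n" by (rule Ost_fun_upd[OF joint w])
  ultimately have "(\<lambda>a. if a < k then v a else (vt(e := w)) (a - k)) \<in> Ost (k + Suc e) n"
    by simp
  with vt' show ?case by blast
qed

section \<open>The orthogonal group action on representatives\<close>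

lemma Og_columns_Ost: "R \<in> Og k \<Longrightarrow> (\<lambda>b c. R c b) \<in> Ost k k"
  by (auto simp: Og_def Ost_def dot_def inR_def)

lemma Og_rows:
  assumes "R \<in> Og k" "c < k" "a < k"
  shows "(\<Sum>b<k. R c b * R a b) = (if c = a then 1 else 0)"
  using Ost_square_rows[OF Og_columns_Ost[OF assms(1)] assms(2,3)] by simp

lemma Og_cancel:
  assumes R: "R \<in> Og k"
  shows "(\<forall>b<k. (\<Sum>a<k. f a * R a b) = (\<Sum>a<k. g a * R a b)) \<longleftrightarrow> (\<forall>a<k. f a = g a)"
proof
  have inverse: "(\<Sum>b<k. R c b * (\<Sum>a<k. u a * R a b)) = u c" if c: "c < k" for u c
  proof -
    have "(\<Sum>b<k. R c b * (\<Sum>a<k. u a * R a b)) = (\<Sum>b<k. \<Sum>a<k. u a * (R c b * R a b))"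
      by (simp add: sum_distrib_left mult_ac)
    also have "\<dots> = (\<Sum>a<k. u a * (\<Sum>b<k. R c b * R a b))"
      by (subst sum.swap) (simp add: sum_distrib_left)
    also have "\<dots> = (\<Sum>a<k. if a = c then u a else 0)"
      by (rule sum.cong) (simp_all add: Og_rows[OF R c])
    also have "\<dots> = u c" using c by simp
    finally show ?thesis .
  qed
  assume h: "\<forall>b<k. (\<Sum>a<k. f a * R a b) = (\<Sum>a<k. g a * R a b)"
  show "\<forall>a<k. f a = g a"
  proof (intro allI impI)
    fix c assume c: "c < k"
    have "(\<Sum>b<k. R c b * (\<Sum>a<k. f a * R a b)) = (\<Sum>b<k. R c b * (\<Sum>a<k. g a * R a b))"
      using h by (intro sum.cong) auto
    then show "f c = g c" by (simp only: inverse[OF c])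
  qed
qed simp

lemma act_lin_eqs:
  assumes "R \<in> Og k"
  shows "(\<forall>b<k. dot n (fst (act k z R) b) x = (\<Sum>a<k. \<beta> a * R a b)) \<longleftrightarrow> lin_eqs n k (fst z) \<beta> x"
  using Og_cancel[OF assms, of "\<lambda>a. dot n (fst z a) x" \<beta>]
  by (simp add: act_def dot_lin_left mult.commute)

lemma orbit_lin_eqs:
  assumes "z \<in> orbit k z0"
  shows "lin_eqs n k (fst z) (snd z) x \<longleftrightarrow> lin_eqs n k (fst z0) (snd z0) x"
proof -
  obtain R where R: "R \<in> Og k" and z: "z = act k z0 R" using assms by (auto simp: orbit_def)
  have "snd z b = (\<Sum>a<k. snd z0 a * R a b)" if "b < k" for b
    using that by (simp add: z act_def)
  then show ?thesis using act_lin_eqs[OF R, of n z0 x "snd z0"] by (simp add: z)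
qed

lemma orbit_orthogonal:
  assumes "z \<in> orbit k z0"
  shows "lin_eqs n k (fst z) (\<lambda>_. 0) x \<longleftrightarrow> lin_eqs n k (fst z0) (\<lambda>_. 0) x"
proof -
  obtain R where R: "R \<in> Og k" and z: "z = act k z0 R" using assms by (auto simp: orbit_def)
  show ?thesis using act_lin_eqs[OF R, of n z0 x "\<lambda>_. 0"] by (simp add: z)
qed

lemma orbit_sqn:
  assumes "z \<in> orbit k z0" "\<forall>a\<ge>k. snd z0 a = 0"
  shows "sqn k (snd z) = sqn k (snd z0)"
proof -
  obtain R where R: "R \<in> Og k" and z: "z = act k z0 R" using assms(1) by (auto simp: orbit_def)
  have "inR k (snd z0)" using assms(2) by (simp add: inR_def)
  then have "sqn k (snd z0) = (\<Sum>b<k. (dot k (\<lambda>c. R c b) (snd z0))^2)"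
    using Ost_square_parseval[OF Og_columns_Ost[OF R]] by (simp add: sqn_eq_dot power2_eq_square)
  also have "\<dots> = sqn k (snd z)"
    unfolding sqn_def z by (rule sum.cong) (auto simp: act_def dot_def mult.commute)
  finally show ?thesis by simp
qed

lemma act_Ost:
  assumes R: "R \<in> Og k" and V: "V \<in> Ost k n"
  shows "fst (act k (V, \<alpha>) R) \<in> Ost k n"
proof -
  have "dot n (lin V (\<lambda>c. R c a) k) (lin V (\<lambda>c. R c b) k) = (if a = b then 1 else 0)"
    if "a < k" "b < k" for a b
    using R that by (simp add: Ost_lin_lin[OF V] Og_def)
  moreover have "inR n (lin V (\<lambda>c. R c a) k)" for a
    by (rule inR_lin) (rule Ost_inR[OF V])
  ultimately show ?thesis by (simp add: Ost_def act_def)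
qed

lemma Mset_act:
  assumes z: "z \<in> Mset geo d j" and R: "R \<in> Og (d - j)"
  shows "act (d - j) z R \<in> Mset geo d j"
proof -
  obtain v \<alpha> where zz: "z = (v, \<alpha>)" by fastforce
  have v: "v \<in> Ost (d - j) (Suc d)" and \<alpha>: "\<forall>a\<ge>d - j. \<alpha> a = 0"
    and cond: "if j = 0 then sqn (d - j) \<alpha> = 1 else if geo then \<forall>a. \<alpha> a = 0 else sqn (d - j) \<alpha> < 1"
    using z zz by (auto simp: Mset_def)
  have "sqn (d - j) (snd (act (d - j) z R)) = sqn (d - j) \<alpha>"
    using orbit_sqn[of "act (d - j) z R" "d - j" z] R \<alpha> zz by (auto simp: orbit_def)
  moreover have "\<forall>a. snd (act (d - j) z R) a = 0" if "\<forall>a. \<alpha> a = 0"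
    using that zz by (simp add: act_def)
  moreover have "fst (act (d - j) z R) \<in> Ost (d - j) (Suc d)"
    using act_Ost[OF R v] zz by simp
  ultimately show ?thesis
    using cond unfolding Mset_def by (cases "act (d - j) z R") (auto simp: act_def split: if_splits)
qed

lemma orbit_Mset: "z0 \<in> Mset geo d j \<Longrightarrow> z \<in> orbit (d - j) z0 \<Longrightarrow> z \<in> Mset geo d j"
  by (auto simp: orbit_def intro: Mset_act)

lemma Mset_in_orbit:
  assumes z: "z \<in> Mset geo d j"
  shows "z \<in> orbit (d - j) z"
proof -
  define I where "I = (\<lambda>a b. if a = b \<and> a < d - j then 1 else (0::real))"
  have "I \<in> Og (d - j)"
    by (auto simp: Og_def I_def if_distrib[of "\<lambda>x. x * _"] cong: if_cong)
  moreover have "act (d - j) z I = z"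
  proof -
    have "lin (fst z) (\<lambda>a. I a b) (d - j) i = (\<Sum>a<d - j. if a = b then fst z a i else 0)"
      for b i unfolding lin_def by (rule sum.cong) (auto simp: I_def)
    then have "lin (fst z) (\<lambda>a. I a b) (d - j) = fst z b" if "b < d - j" for b
      using that by auto
    moreover have "(\<Sum>a<d - j. snd z a * I a b) = snd z b" if "b < d - j" for b
      using that by (simp add: I_def if_distrib cong: if_cong)
    ultimately show ?thesis
      using z by (auto simp: act_def Mset_def Ost_def fun_eq_iff prod_eq_iff)
  qed
  ultimately show ?thesis unfolding orbit_def by force
qed

lemma MsetD:
  assumes "z \<in> Mset geo d j"
  shows "fst z \<in> Ost (d - j) (Suc d)" "\<forall>a\<ge>d - j. snd z a = 0"
    and "j = 0 \<Longrightarrow> sqn (d - j) (snd z) = 1" "j \<noteq> 0 \<Longrightarrow> sqn (d - j) (snd z) < 1"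
  using assms by (auto simp: Mset_def sqn_def split: if_splits)

lemma rep_of_in_Pset:
  assumes "P \<in> Pset geo d j"
  shows "rep_of P \<in> P" "rep_of P \<in> Mset geo d j"
proof -
  obtain z where z: "z \<in> Mset geo d j" and P: "P = orbit (d - j) z"
    using assms by (auto simp: Pset_def)
  show "rep_of P \<in> P"
    unfolding rep_of_def P using Mset_in_orbit[OF z] by (rule someI)
  then show "rep_of P \<in> Mset geo d j" using orbit_Mset[OF z] P by simp
qed

lemma Pset_member:
  assumes P: "P \<in> Pset geo d j" and z: "z \<in> P"
  shows "z \<in> Mset geo d j"
    and "lin_eqs n (d - j) (fst z) (snd z) x \<longleftrightarrow> lin_eqs n (d - j) (fst (rep_of P)) (snd (rep_of P)) x"
    and "sqn (d - j) (snd z) = sqn (d - j) (snd (rep_of P))"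
    and "lin_eqs n (d - j) (fst z) (\<lambda>_. 0) x \<longleftrightarrow> lin_eqs n (d - j) (fst (rep_of P)) (\<lambda>_. 0) x"
proof -
  obtain z0 where z0: "z0 \<in> Mset geo d j" and P0: "P = orbit (d - j) z0"
    using P by (auto simp: Pset_def)
  have rep: "rep_of P \<in> orbit (d - j) z0" using rep_of_in_Pset(1)[OF P] P0 by simp
  show "z \<in> Mset geo d j" using orbit_Mset[OF z0] z P0 by simp
  show "lin_eqs n (d - j) (fst z) (snd z) x \<longleftrightarrow> lin_eqs n (d - j) (fst (rep_of P)) (snd (rep_of P)) x"
    using orbit_lin_eqs[OF rep] orbit_lin_eqs[of z "d - j" z0] z P0 by simp
  show "sqn (d - j) (snd z) = sqn (d - j) (snd (rep_of P))"
    using orbit_sqn[OF rep] orbit_sqn[of z "d - j" z0] MsetD(2)[OF z0] z P0 by simp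
  show "lin_eqs n (d - j) (fst z) (\<lambda>_. 0) x \<longleftrightarrow> lin_eqs n (d - j) (fst (rep_of P)) (\<lambda>_. 0) x"
    using orbit_orthogonal[OF rep] orbit_orthogonal[of z "d - j" z0] z P0 by simp
qed

section \<open>Projection onto a subsphere as the unique maximiser\<close>

definition unique_argmax :: "('a \<Rightarrow> 'b::linorder) \<Rightarrow> 'a set \<Rightarrow> 'a \<Rightarrow> bool" where
  "unique_argmax f S x \<longleftrightarrow> x \<in> S \<and> (\<forall>y\<in>S. y \<noteq> x \<longrightarrow> f y < f x)"

lemma unique_argmax_transfer:
  fixes f :: "'a \<Rightarrow> real" and g :: "'b \<Rightarrow> real"
  assumes "\<phi> ` X = T" "unique_argmax f X w" "unique_argmax g T u"
    and "\<And>x. x \<in> X \<Longrightarrow> g (\<phi> x) = c * f x + e" and "c > 0"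
  shows "u = \<phi> w"
proof (rule ccontr)
  assume ne: "u \<noteq> \<phi> w"
  obtain x where x: "x \<in> X" and u: "u = \<phi> x"
    using assms(1,3) by (auto simp: unique_argmax_def)
  have "g (\<phi> w) < g (\<phi> x)"
    using assms(1-3) ne u by (auto simp: unique_argmax_def)
  then have "f w < f x" using assms(2,4,5) x by (simp add: unique_argmax_def)
  moreover have "x \<noteq> w" using ne u by auto
  ultimately show False using assms(2) x by (auto simp: unique_argmax_def)
qed

lemma residual_eq: "residual d k V x = (\<lambda>i. x i - lin V (\<lambda>a. dot (Suc d) (V a) x) k i)"
  by (simp add: residual_def lin_def)

lemma Ost_dot_residual:
  "V \<in> Ost k (Suc d) \<Longrightarrow> a < k \<Longrightarrow> dot (Suc d) (V a) (residual d k V x) = 0"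
  by (simp add: residual_eq dot_diff_right Ost_dot_lin)

lemma lin_eqs_center: "lin_eqs n k V \<alpha> y \<Longrightarrow> dot n (lin V \<alpha> k) y = sqn k \<alpha>"
  by (simp add: dot_lin_left sqn_def power2_eq_square)

lemma dot_self_sub_center:
  assumes V: "V \<in> Ost k (Suc d)" and y: "y \<in> Sph d" "lin_eqs (Suc d) k V \<alpha> y"
  shows "dot (Suc d) (\<lambda>i. y i - lin V \<alpha> k i) (\<lambda>i. y i - lin V \<alpha> k i) = 1 - sqn k \<alpha>"
proof -
  have cy: "dot (Suc d) (lin V \<alpha> k) y = sqn k \<alpha>" by (rule lin_eqs_center[OF y(2)])
  then have "dot (Suc d) y (lin V \<alpha> k) = sqn k \<alpha>" by (simp add: dot_commute)
  moreover have "dot (Suc d) (lin V \<alpha> k) (lin V \<alpha> k) = sqn k \<alpha>"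
    using Ost_lin_lin[OF V] by (simp add: sqn_def power2_eq_square)
  ultimately show ?thesis using y(1) cy by (simp add: Sph_def dot_diff_left dot_diff_right)
qed

lemma dot_residual_sub_center:
  assumes V: "V \<in> Ost k (Suc d)" and y: "lin_eqs (Suc d) k V \<alpha> y"
  shows "dot (Suc d) q y = dot (Suc d) q (lin V \<alpha> k) + dot (Suc d) (residual d k V q) (\<lambda>i. y i - lin V \<alpha> k i)"
proof -
  have "dot (Suc d) (V a) (\<lambda>i. y i - lin V \<alpha> k i) = 0" if "a < k" for a
    using y that Ost_dot_lin[OF V] by (simp add: dot_diff_right)
  then show ?thesis by (simp add: residual_eq dot_diff_left dot_diff_right dot_lin_left)
qed

lemma lin_eqs_point:
  assumes V: "V \<in> Ost k (Suc d)" and s: "sqn k \<alpha> = 1"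
  shows "{x \<in> Sph d. lin_eqs (Suc d) k V \<alpha> x} = {lin V \<alpha> k}"
proof -
  let ?c = "lin V \<alpha> k"
  have c: "inR (Suc d) ?c" by (rule inR_lin) (rule Ost_inR[OF V])
  have "y = ?c" if y: "y \<in> Sph d" "lin_eqs (Suc d) k V \<alpha> y" for y
    using inR_eqI[OF _ c] dot_self_sub_center[OF V y] y(1) s by (simp add: Sph_def)
  moreover have "?c \<in> Sph d"
    using c Ost_lin_lin[OF V] s by (simp add: Sph_def sqn_def power2_eq_square)
  moreover have "lin_eqs (Suc d) k V \<alpha> ?c" using Ost_dot_lin[OF V] by simp
  ultimately show ?thesis by blast
qed

lemma proj_mem_subsphere:
  assumes V: "V \<in> Ost (d - j) (Suc d)" and s: "sqn (d - j) \<alpha> \<le> 1"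
    and q: "inR (Suc d) q" and N: "vnorm (Suc d) (residual d (d - j) V q) \<noteq> 0"
  shows "proj d j (V, \<alpha>) q \<in> {y \<in> Sph d. lin_eqs (Suc d) (d - j) V \<alpha> y}"
proof -
  let ?n = "Suc d" and ?k = "d - j"
  define c where "c = lin V \<alpha> ?k"
  define r where "r = residual d ?k V q"
  define t where "t = sqrt (1 - sqn ?k \<alpha>) / vnorm ?n r"
  have p: "proj d j (V, \<alpha>) q = (\<lambda>i. c i + t * r i)"
    by (simp add: proj_def c_def r_def t_def)
  have "dot ?n r r > 0"
    using N dot_self_nonneg[of ?n r] by (simp add: r_def vnorm_def order_less_le)
  then have tr: "t^2 * dot ?n r r = 1 - sqn ?k \<alpha>"
    using s by (simp add: t_def vnorm_def power_divide)
  have Vr: "dot ?n (V a) r = 0" if "a < ?k" for a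
    using Ost_dot_residual[OF V that] by (simp add: r_def)
  have cr: "dot ?n c r = 0" using Vr by (simp add: c_def dot_lin_left)
  then have rc: "dot ?n r c = 0" by (simp add: dot_commute)
  have cc: "dot ?n c c = sqn ?k \<alpha>"
    using Ost_lin_lin[OF V] by (simp add: c_def sqn_def power2_eq_square)
  have "dot ?n (\<lambda>i. c i + t * r i) (\<lambda>i. c i + t * r i) = dot ?n c c + t^2 * dot ?n r r"
    using cr rc by (simp add: dot_add_left dot_add_right dot_scale_left dot_scale_right power2_eq_square)
  moreover have "inR ?n (\<lambda>i. c i + t * r i)"
    using q inR_lin[OF Ost_inR[OF V]] by (auto simp: c_def r_def residual_eq inR_def)
  moreover have "lin_eqs ?n ?k V \<alpha> (\<lambda>i. c i + t * r i)"
    using Vr Ost_dot_lin[OF V] by (simp add: c_def dot_add_right dot_scale_right)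
  ultimately show ?thesis using cc tr by (simp add: p Sph_def)
qed

lemma dot_less_of_ne_scale:
  assumes u: "inR n u" and r: "inR n r" and uu: "dot n u u = \<rho>^2" and rr: "dot n r r = N^2"
    and N: "N > 0" and \<rho>: "\<rho> \<ge> 0" and ne: "u \<noteq> (\<lambda>i. \<rho> / N * r i)"
  shows "dot n r u < \<rho> * N"
proof -
  define t where "t = \<rho> / N"
  have "inR n (\<lambda>i. t * r i)" using r by (simp add: inR_def)
  then have "dot n (\<lambda>i. u i - t * r i) (\<lambda>i. u i - t * r i) \<noteq> 0"
    using inR_eqI[OF u] ne by (auto simp: t_def)
  moreover have "dot n u r = dot n r u" by (rule dot_commute)
  ultimately have "0 < dot n u u - 2 * t * dot n r u + t^2 * dot n r r"
    using dot_self_nonneg[of n "\<lambda>i. u i - t * r i"]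
    by (simp add: dot_diff_left dot_diff_right dot_scale_left dot_scale_right power2_eq_square)
  then have "\<rho> * dot n r u < \<rho> * (\<rho> * N)"
    using uu rr N by (simp add: t_def power2_eq_square field_simps)
  then show ?thesis using \<rho> by (simp add: mult_less_cancel_left)
qed

lemma proj_unique_argmax:
  assumes V: "V \<in> Ost (d - j) (Suc d)" and s: "sqn (d - j) \<alpha> \<le> 1"
    and q: "inR (Suc d) q" and N: "vnorm (Suc d) (residual d (d - j) V q) \<noteq> 0"
  shows "unique_argmax (dot (Suc d) q) {y \<in> Sph d. lin_eqs (Suc d) (d - j) V \<alpha> y} (proj d j (V, \<alpha>) q)"
proof -
  let ?n = "Suc d" and ?k = "d - j"
  define c where "c = lin V \<alpha> ?k"
  define r where "r = residual d ?k V q"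
  define \<rho> where "\<rho> = sqrt (1 - sqn ?k \<alpha>)"
  define N where "N = vnorm ?n r"
  define t where "t = \<rho> / N"
  define p where "p = proj d j (V, \<alpha>) q"
  have p: "p = (\<lambda>i. c i + t * r i)"
    by (simp add: p_def proj_def c_def r_def \<rho>_def N_def t_def)
  have N_pos: "N > 0" and rr: "dot ?n r r = N^2"
    using N dot_self_nonneg[of ?n r] by (auto simp: N_def r_def vnorm_def)
  have \<rho>: "\<rho> \<ge> 0" "\<rho>^2 = 1 - sqn ?k \<alpha>" using s by (auto simp: \<rho>_def)
  have c: "inR ?n c" unfolding c_def by (rule inR_lin) (rule Ost_inR[OF V])
  have r: "inR ?n r"
    using q inR_lin[OF Ost_inR[OF V], where f="\<lambda>a. dot ?n (V a) q"]
    by (simp add: r_def residual_eq inR_def)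
  have p_in: "p \<in> {y \<in> Sph d. lin_eqs ?n ?k V \<alpha> y}"
    unfolding p_def by (rule proj_mem_subsphere[OF V s q N])
  have "lin_eqs ?n ?k V \<alpha> p" using p_in by simp
  then have "dot ?n q p = dot ?n q c + dot ?n r (\<lambda>i. p i - c i)"
    unfolding c_def r_def by (rule dot_residual_sub_center[OF V])
  then have "dot ?n q p = dot ?n q c + t * N^2"
    using rr by (simp add: p dot_scale_right)
  then have qp: "dot ?n q p = dot ?n q c + \<rho> * N" using N_pos by (simp add: t_def power2_eq_square)
  have "dot ?n q y < dot ?n q p" if y: "y \<in> Sph d" "lin_eqs ?n ?k V \<alpha> y" "y \<noteq> p" for y
  proof -
    define u where "u = (\<lambda>i. y i - c i)"
    have "dot ?n r u < \<rho> * N"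
    proof (rule dot_less_of_ne_scale[OF _ r _ rr N_pos \<rho>(1)])
      show "inR ?n u" using y(1) c by (simp add: u_def Sph_def inR_def)
      show "dot ?n u u = \<rho>^2" using dot_self_sub_center[OF V y(1,2)] \<rho>(2) by (simp add: u_def c_def)
      show "u \<noteq> (\<lambda>i. \<rho> / N * r i)" using y(3) by (auto simp: u_def p t_def fun_eq_iff algebra_simps)
    qed
    then show ?thesis
      using dot_residual_sub_center[OF V y(2), of q] qp by (simp add: u_def c_def r_def)
  qed
  then show ?thesis using p_in unfolding unique_argmax_def p_def by blast
qed

lemma subsphP_eq:
  assumes "P \<in> Pset geo d j"
  shows "subsphP d j P = {x \<in> Sph d. lin_eqs (Suc d) (d - j) (fst (rep_of P)) (snd (rep_of P)) x}"
proof (cases "j = 0")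
  case True
  note z = MsetD[OF rep_of_in_Pset(2)[OF assms]]
  show ?thesis
    using lin_eqs_point[OF z(1) z(3)[OF True]] True by (simp add: subsphP_def subsph_def)
qed (simp add: subsphP_def subsph_def)

lemma projP_unique_argmax:
  assumes P: "P \<in> Pset geo d j" and q: "inR (Suc d) q" and ok: "projP_ok d j P q"
  shows "unique_argmax (dot (Suc d) q) (subsphP d j P) (projP d j P q)"
proof -
  obtain V \<alpha> where z: "rep_of P = (V, \<alpha>)" by fastforce
  note M = MsetD[OF rep_of_in_Pset(2)[OF P], unfolded z fst_conv snd_conv]
  show ?thesis
  proof (cases "j = 0")
    case True
    then have "projP d j P q = lin V \<alpha> d"
      using M(3) by (simp add: projP_def proj_def z)
    then show ?thesis
      using True by (simp add: unique_argmax_def subsphP_def subsph_def z)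
  next
    case False
    have "vnorm (Suc d) (residual d (d - j) V q) \<noteq> 0"
      using ok False by (simp add: projP_ok_def proj_ok_def z)
    from proj_unique_argmax[OF M(1) less_imp_le[OF M(4)[OF False]] q this]
    show ?thesis using False by (simp add: projP_def subsphP_def subsph_def z)
  qed
qed

section \<open>The chart of a subsphere\<close>

lemma sum_lessThan_add: "(\<Sum>a<k + (l::nat). f a) = (\<Sum>a<k. f a) + (\<Sum>a<l. f (k + a))"
  by (induction l) (simp_all add: add.assoc)

lemma complement_Ost:
  assumes v: "v \<in> Ost (m - j) (Suc m)" and jm: "j \<le> m"
  shows "complement m j v \<in> Ost (Suc j) (Suc m)"
    "(\<lambda>a. if a < m - j then v a else complement m j v (a - (m - j))) \<in> Ost (Suc m) (Suc m)"
proof -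
  have "m - j + Suc j = Suc m" using jm by simp
  then have "\<exists>vt. vt \<in> Ost (Suc j) (Suc m) \<and>
      (\<lambda>a. if a < m - j then v a else vt (a - (m - j))) \<in> Ost (Suc m) (Suc m)"
    using Ost_completion_exists[OF v, of "Suc j"] by simp
  from someI_ex[OF this] show "complement m j v \<in> Ost (Suc j) (Suc m)"
    "(\<lambda>a. if a < m - j then v a else complement m j v (a - (m - j))) \<in> Ost (Suc m) (Suc m)"
    unfolding complement_def by auto
qed

locale chart =
  fixes m j :: nat and v :: "nat \<Rightarrow> vec" and \<alpha> :: "nat \<Rightarrow> real"
  assumes jm: "j \<le> m" and v: "v \<in> Ost (m - j) (Suc m)" and \<alpha>: "sqn (m - j) \<alpha> < 1"
begin

definition "vt = complement m j v"
definition "\<rho> = sqrt (1 - sqn (m - j) \<alpha>)"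
definition "Y = {x \<in> Sph m. lin_eqs (Suc m) (m - j) v \<alpha> x}"
definition "g x = (\<lambda>c. tmul m j vt x c / \<rho>)"
definition "g_inv z = (\<lambda>i. lin v \<alpha> (m - j) i + \<rho> * lin vt z (Suc j) i)"

lemma vt: "vt \<in> Ost (Suc j) (Suc m)"
  and frame: "(\<lambda>a. if a < m - j then v a else vt (a - (m - j))) \<in> Ost (Suc m) (Suc m)"
  using complement_Ost[OF v jm] unfolding vt_def by auto

lemma \<rho>_pos: "\<rho> > 0"
  using \<alpha> by (simp add: \<rho>_def)

lemma \<rho>_sq: "\<rho>^2 = 1 - sqn (m - j) \<alpha>"
  using \<alpha> by (simp add: \<rho>_def)

lemma dot_v_vt:
  assumes a: "a < m - j" and c: "c < Suc j"
  shows "dot (Suc m) (v a) (vt c) = 0"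
proof -
  have "m - j + c < Suc m" "\<not> m - j + c < m - j" "a \<noteq> m - j + c" using a c jm by auto
  then show ?thesis using Ost_dot[OF frame, of a "m - j + c"] a by simp
qed

lemma sum_frame: "(\<Sum>a<Suc m. f a) = (\<Sum>a<m - j. f a) + (\<Sum>c<Suc j. f (m - j + c))"
  using sum_lessThan_add[of f "m - j" "Suc j"] jm by (simp del: sum.lessThan_Suc)

lemma frame_expansion:
  assumes "inR (Suc m) x"
  shows "x i = (\<Sum>a<m - j. dot (Suc m) (v a) x * v a i) + (\<Sum>c<Suc j. dot (Suc m) (vt c) x * vt c i)"
  using Ost_square_expansion[OF frame assms, of i]
  by (simp only: sum_frame) (simp del: sum.lessThan_Suc)

lemma frame_parseval:
  assumes "inR (Suc m) x"
  shows "dot (Suc m) x y = (\<Sum>a<m - j. dot (Suc m) (v a) x * dot (Suc m) (v a) y)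
    + (\<Sum>c<Suc j. dot (Suc m) (vt c) x * dot (Suc m) (vt c) y)"
  using Ost_square_parseval[OF frame assms, of y]
  by (simp only: sum_frame) (simp del: sum.lessThan_Suc)

lemma tmul_dot:
  assumes "inR (Suc m) y"
  shows "dot (Suc j) (tmul m j vt y) (tmul m j vt x)
    = dot (Suc m) y x - (\<Sum>a<m - j. dot (Suc m) (v a) y * dot (Suc m) (v a) x)"
proof -
  have "dot (Suc j) (tmul m j vt y) (tmul m j vt x) = (\<Sum>c<Suc j. dot (Suc m) (vt c) y * dot (Suc m) (vt c) x)"
    by (simp add: dot_def tmul_def)
  then show ?thesis using frame_parseval[OF assms, of x] by simp
qed

lemma dot_g:
  assumes y: "y \<in> Y" and x: "x \<in> Y"
  shows "dot (Suc j) (g y) (g x) = (dot (Suc m) y x - sqn (m - j) \<alpha>) / \<rho>^2"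
proof -
  have "dot (Suc j) (g y) (g x) = dot (Suc j) (tmul m j vt y) (tmul m j vt x) / \<rho>^2"
    by (simp add: g_def dot_divide_left dot_divide_right power2_eq_square)
  then show ?thesis
    using tmul_dot[of y x] y x by (simp add: Y_def Sph_def sqn_def power2_eq_square)
qed

lemma vnorm_tmul: "x \<in> Y \<Longrightarrow> vnorm (Suc j) (tmul m j vt x) = \<rho>"
  using tmul_dot[of x x] \<rho>_sq \<rho>_pos
  by (simp add: Y_def Sph_def vnorm_def sqn_def power2_eq_square real_sqrt_unique)

lemma inR_g: "inR (Suc j) (g x)"
  by (simp add: g_def tmul_def inR_def)

lemma g_in_Sph: "x \<in> Y \<Longrightarrow> g x \<in> Sph j"
  using dot_g[of x x] \<rho>_sq \<rho>_pos inR_g \<alpha> by (simp add: Y_def Sph_def)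

lemma dot_vt_g_inv:
  assumes "c < Suc j"
  shows "dot (Suc m) (vt c) (g_inv z) = \<rho> * z c"
proof -
  have "dot (Suc m) (vt c) (v a) = 0" if "a < m - j" for a
    using dot_v_vt[OF that assms] by (simp add: dot_commute)
  then have "dot (Suc m) (vt c) (lin v \<alpha> (m - j)) = 0" by (simp add: dot_lin_right)
  then show ?thesis
    using assms by (simp add: g_inv_def dot_add_right dot_scale_right Ost_dot_lin[OF vt])
qed

lemma dot_v_g_inv:
  assumes "a < m - j"
  shows "dot (Suc m) (v a) (g_inv z) = \<alpha> a"
proof -
  have "dot (Suc m) (v a) (lin vt z (Suc j)) = 0"
    using dot_v_vt[OF assms] by (simp add: dot_lin_right)
  then show ?thesis
    using assms by (simp add: g_inv_def dot_add_right dot_scale_right Ost_dot_lin[OF v])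
qed

lemma dot_g_inv:
  assumes "lin_eqs (Suc m) (m - j) v (\<lambda>_. 0) w"
  shows "dot (Suc m) w (g_inv z) = \<rho> * (\<Sum>c<Suc j. z c * dot (Suc m) w (vt c))"
proof -
  have "dot (Suc m) w (v a) = 0" if "a < m - j" for a
    using assms that dot_commute by metis
  then show ?thesis by (simp add: g_inv_def dot_add_right dot_scale_right dot_lin_right)
qed

lemma g_inv_in_Y:
  assumes "z \<in> Sph j"
  shows "g_inv z \<in> Y"
proof -
  have "inR (Suc m) (g_inv z)"
    using inR_lin[OF Ost_inR[OF v]] inR_lin[OF Ost_inR[OF vt]] by (simp add: g_inv_def inR_def)
  moreover have "dot (Suc m) (g_inv z) (g_inv z) = 1"
  proof -
    have "dot (Suc m) (lin v \<alpha> (m - j)) (lin vt z (Suc j)) = 0"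
      by (simp add: dot_lin_left dot_lin_right dot_v_vt)
    moreover from this have "dot (Suc m) (lin vt z (Suc j)) (lin v \<alpha> (m - j)) = 0"
      by (simp add: dot_commute)
    moreover have "dot (Suc m) (lin v \<alpha> (m - j)) (lin v \<alpha> (m - j)) = sqn (m - j) \<alpha>"
      using Ost_lin_lin[OF v] by (simp add: sqn_def power2_eq_square)
    moreover have "dot (Suc m) (lin vt z (Suc j)) (lin vt z (Suc j)) = 1"
      using Ost_lin_lin[OF vt] assms by (simp add: Sph_def dot_def del: sum.lessThan_Suc)
    ultimately show ?thesis
      using \<rho>_sq by (simp add: g_inv_def dot_add_left dot_add_right dot_scale_left dot_scale_right
          power2_eq_square)
  qed
  ultimately show ?thesis using dot_v_g_inv by (simp add: Y_def Sph_def)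
qed

lemma g_inv_g: "x \<in> Y \<Longrightarrow> g_inv (g x) = x"
proof
  fix i assume x: "x \<in> Y"
  have "\<rho> * lin vt (g x) (Suc j) i = (\<Sum>c<Suc j. dot (Suc m) (vt c) x * vt c i)"
    using \<rho>_pos by (simp add: lin_def sum_distrib_left g_def tmul_def del: sum.lessThan_Suc)
  moreover have "lin v \<alpha> (m - j) i = (\<Sum>a<m - j. dot (Suc m) (v a) x * v a i)"
    using x by (simp add: lin_def Y_def)
  ultimately show "g_inv (g x) i = x i"
    using frame_expansion[of x i] x by (simp add: g_inv_def Y_def Sph_def)
qed

lemma g_g_inv: "inR (Suc j) z \<Longrightarrow> g (g_inv z) = z"
  using dot_vt_g_inv \<rho>_pos by (auto simp: g_def tmul_def inR_def fun_eq_iff)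

lemma dot_tmul_orthogonal:
  assumes "inR (Suc m) w" "lin_eqs (Suc m) (m - j) v (\<lambda>_. 0) w"
  shows "dot (Suc j) (tmul m j vt w) (tmul m j vt x) = dot (Suc m) w x"
  using tmul_dot[OF assms(1), of x] assms(2) by simp

lemma tmul_Ost:
  assumes W: "W \<in> Ost k (Suc m)" and Wv: "\<forall>i<k. lin_eqs (Suc m) (m - j) v (\<lambda>_. 0) (W i)"
  shows "(\<lambda>i. tmul m j vt (W i)) \<in> Ost k (Suc j)"
proof -
  have "dot (Suc j) (tmul m j vt (W a)) (tmul m j vt (W b)) = (if a = b then 1 else 0)"
    if "a < k" "b < k" for a b
    using dot_tmul_orthogonal[OF Ost_inR[OF W that(1)]] Wv Ost_dot[OF W that] that by simp
  moreover have "W i = (\<lambda>_. 0)" if "k \<le> i" for i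
    using W that by (simp add: Ost_def)
  ultimately show ?thesis by (auto simp: Ost_def tmul_def inR_def dot_def fun_eq_iff)
qed

lemma image_lin_eqs:
  assumes W: "W \<in> Ost k (Suc m)" and Wv: "\<forall>i<k. lin_eqs (Suc m) (m - j) v (\<lambda>_. 0) (W i)"
  shows "g ` {x \<in> Y. lin_eqs (Suc m) k W \<beta> x}
    = {z \<in> Sph j. lin_eqs (Suc j) k (\<lambda>i. tmul m j vt (W i)) (\<lambda>i. \<beta> i / \<rho>) z}"
proof (intro equalityI subsetI)
  have dot_W_g: "dot (Suc j) (tmul m j vt (W i)) (g x) = dot (Suc m) (W i) x / \<rho>" if "i < k" for i x
    using dot_tmul_orthogonal[OF Ost_inR[OF W that]] Wv that by (simp add: g_def dot_divide_right)
  fix z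
  assume "z \<in> g ` {x \<in> Y. lin_eqs (Suc m) k W \<beta> x}"
  then obtain x where x: "x \<in> Y" "lin_eqs (Suc m) k W \<beta> x" and z: "z = g x" by blast
  show "z \<in> {z \<in> Sph j. lin_eqs (Suc j) k (\<lambda>i. tmul m j vt (W i)) (\<lambda>i. \<beta> i / \<rho>) z}"
    using g_in_Sph[OF x(1)] dot_W_g x(2) z by simp
next
  fix z
  assume z: "z \<in> {z \<in> Sph j. lin_eqs (Suc j) k (\<lambda>i. tmul m j vt (W i)) (\<lambda>i. \<beta> i / \<rho>) z}"
  have "dot (Suc m) (W i) (g_inv z) = \<beta> i" if "i < k" for i
  proof -
    have "dot (Suc j) (tmul m j vt (W i)) z = (\<Sum>c<Suc j. z c * dot (Suc m) (W i) (vt c))"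
      by (simp add: dot_def tmul_def dot_commute[of _ "vt _"] mult.commute del: sum.lessThan_Suc)
    then have "(\<Sum>c<Suc j. z c * dot (Suc m) (W i) (vt c)) = \<beta> i / \<rho>"
      using z that by simp
    then show ?thesis
      using dot_g_inv[of "W i" z] Wv that \<rho>_pos by (simp del: sum.lessThan_Suc)
  qed
  then have "g_inv z \<in> {x \<in> Y. lin_eqs (Suc m) k W \<beta> x}" using g_inv_in_Y z by simp
  moreover have "g (g_inv z) = z" using z g_g_inv by (simp add: Sph_def)
  ultimately show "z \<in> g ` {x \<in> Y. lin_eqs (Suc m) k W \<beta> x}" by force
qed

lemma image_lin_eqs_Mset:
  assumes W: "W \<in> Ost k (Suc m)" and Wv: "\<forall>i<k. lin_eqs (Suc m) (m - j) v (\<lambda>_. 0) (W i)"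
    and \<beta>: "\<forall>i\<ge>k. \<beta> i = 0" and jk: "j' + k = j"
    and \<zeta>: "\<zeta> \<in> Mset geo m j'" and sqn_\<zeta>: "sqn (m - j') (snd \<zeta>) = sqn (m - j) \<alpha> + sqn k \<beta>"
  shows "((\<lambda>i. tmul m j vt (W i)), (\<lambda>i. \<beta> i / \<rho>)) \<in> Mset geo j j'"
proof -
  have sqn_\<beta>: "sqn k (\<lambda>i. \<beta> i / \<rho>) = (sqn (m - j') (snd \<zeta>) - sqn (m - j) \<alpha>) / (1 - sqn (m - j) \<alpha>)"
    using sqn_\<zeta> \<rho>_sq by (simp add: sqn_divide)
  have geo: "\<forall>i. \<beta> i / \<rho> = 0" if "geo" "j' \<noteq> 0"
  proof -
    have "sqn (m - j') (snd \<zeta>) = 0" using \<zeta> that by (cases \<zeta>) (simp add: Mset_def sqn_def)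
    then have "sqn k \<beta> = 0" using sqn_\<zeta> sqn_nonneg[of "m - j" \<alpha>] sqn_nonneg[of k \<beta>] by linarith
    then have "\<forall>i\<in>{..<k}. \<beta> i ^ 2 = 0" unfolding sqn_def by (subst sum_nonneg_eq_0_iff[symmetric]) auto
    then show ?thesis using \<beta> by (metis div_0 lessThan_iff not_le power_eq_0_iff)
  qed
  have "if j' = 0 then sqn k (\<lambda>i. \<beta> i / \<rho>) = 1
      else if geo then \<forall>i. \<beta> i / \<rho> = 0 else sqn k (\<lambda>i. \<beta> i / \<rho>) < 1"
    using MsetD(3,4)[OF \<zeta>] sqn_\<beta> geo \<alpha> by (simp add: divide_less_eq)
  moreover have "\<forall>i\<ge>k. \<beta> i / \<rho> = 0" using \<beta> by simp
  moreover have "j - j' = k" using jk by simp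
  ultimately show ?thesis
    using tmul_Ost[OF W Wv] unfolding Mset_def by (simp only: mem_Collect_eq prod.case)
qed

lemma image_lin_eqs_Pset:
  assumes W: "W \<in> Ost k (Suc m)" and Wv: "\<forall>i<k. lin_eqs (Suc m) (m - j) v (\<lambda>_. 0) (W i)"
    and \<beta>: "\<forall>i\<ge>k. \<beta> i = 0" and jk: "j' + k = j"
    and \<zeta>: "\<zeta> \<in> Mset geo m j'" and sqn_\<zeta>: "sqn (m - j') (snd \<zeta>) = sqn (m - j) \<alpha> + sqn k \<beta>"
  shows "\<exists>P\<in>Pset geo j j'. subsphP j j' P = g ` {x \<in> Y. lin_eqs (Suc m) k W \<beta> x}"
proof
  define z where "z = ((\<lambda>i. tmul m j vt (W i)), (\<lambda>i. \<beta> i / \<rho>))"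
  have k: "j - j' = k" using jk by simp
  show P: "orbit k z \<in> Pset geo j j'"
    using image_lin_eqs_Mset[OF assms] k unfolding Pset_def z_def by auto
  have "rep_of (orbit k z) \<in> orbit k z" using rep_of_in_Pset(1)[OF P] .
  then show "subsphP j j' (orbit k z) = g ` {x \<in> Y. lin_eqs (Suc m) k W \<beta> x}"
    using subsphP_eq[OF P] orbit_lin_eqs image_lin_eqs[OF W Wv] k by (simp add: z_def)
qed

lemma proj_in_Y:
  "inR (Suc m) q \<Longrightarrow> vnorm (Suc m) (residual m (m - j) v q) \<noteq> 0 \<Longrightarrow> proj m j (v, \<alpha>) q \<in> Y"
  using proj_mem_subsphere[OF v less_imp_le[OF \<alpha>]] by (simp add: Y_def)

lemma dot_g_proj_affine:
  assumes q: "inR (Suc m) q" and N: "vnorm (Suc m) (residual m (m - j) v q) \<noteq> 0"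
  obtains c e where "c > 0"
    "\<And>x. x \<in> Y \<Longrightarrow> dot (Suc j) (g (proj m j (v, \<alpha>) q)) (g x) = c * dot (Suc m) q x + e"
proof -
  define y where "y = proj m j (v, \<alpha>) q"
  define r where "r = residual m (m - j) v q"
  define t where "t = \<rho> / vnorm (Suc m) r"
  define K where "K = (\<Sum>a<m - j. dot (Suc m) (v a) q * \<alpha> a)"
  have y: "y = (\<lambda>i. lin v \<alpha> (m - j) i + t * r i)"
    by (simp add: y_def proj_def r_def t_def \<rho>_def)
  have "dot (Suc m) r r > 0"
    using N dot_self_nonneg[of "Suc m" r] by (simp add: r_def vnorm_def order_less_le)
  then have t: "t > 0" using \<rho>_pos by (simp add: t_def vnorm_def)
  have "dot (Suc j) (g y) (g x) = t / \<rho>^2 * dot (Suc m) q x + - (t / \<rho>^2 * K)" if x: "x \<in> Y" for x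
  proof -
    have "lin_eqs (Suc m) (m - j) v \<alpha> x" using x by (simp add: Y_def)
    then have "dot (Suc m) r x = dot (Suc m) q x - K"
      by (simp add: r_def K_def residual_eq dot_diff_left dot_lin_left)
    moreover have "dot (Suc m) (lin v \<alpha> (m - j)) x = sqn (m - j) \<alpha>"
      using x lin_eqs_center by (simp add: Y_def)
    ultimately have "dot (Suc m) y x - sqn (m - j) \<alpha> = t * (dot (Suc m) q x - K)"
      by (simp add: y dot_add_left dot_scale_left)
    then show ?thesis
      using dot_g[OF proj_in_Y[OF q N, folded y_def] x]
      by (simp add: right_diff_distrib diff_divide_distrib)
  qed
  then show thesis using that[of "t / \<rho>^2"] t \<rho>_pos by (simp add: y_def)
qed

lemma proj_commute:
  assumes q: "inR (Suc m) q" and N: "vnorm (Suc m) (residual m (m - j) v q) \<noteq> 0"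
    and X: "X \<subseteq> Y" "unique_argmax (dot (Suc m) q) X w"
    and P: "P \<in> Pset geo j j'" "subsphP j j' P = g ` X"
    and ok: "projP_ok j j' P (g (proj m j (v, \<alpha>) q))"
  shows "g_inv (projP j j' P (g (proj m j (v, \<alpha>) q))) = w"
proof -
  obtain c e where c: "c > 0"
    and affine: "\<And>x. x \<in> Y \<Longrightarrow> dot (Suc j) (g (proj m j (v, \<alpha>) q)) (g x) = c * dot (Suc m) q x + e"
    using dot_g_proj_affine[OF q N] by blast
  have "projP j j' P (g (proj m j (v, \<alpha>) q)) = g w"
  proof (rule unique_argmax_transfer[OF refl X(2) _ _ c])
    show "unique_argmax (dot (Suc j) (g (proj m j (v, \<alpha>) q))) (g ` X) (projP j j' P (g (proj m j (v, \<alpha>) q)))"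
      using projP_unique_argmax[OF P(1) inR_g ok] P(2) by simp
    show "dot (Suc j) (g (proj m j (v, \<alpha>) q)) (g x) = c * dot (Suc m) q x + e" if "x \<in> X" for x
      using affine X(1) that by blast
  qed
  moreover have "w \<in> Y" using X by (auto simp: unique_argmax_def)
  ultimately show ?thesis using g_inv_g by simp
qed

lemma gmap_eq: "rep_of P = (v, \<alpha>) \<Longrightarrow> x \<in> Y \<Longrightarrow> gmap m j P x = g x"
  using vnorm_tmul by (simp add: gmap_def g_def vt_def)

lemma ginv_eq: "rep_of P = (v, \<alpha>) \<Longrightarrow> ginv m j P = g_inv"
  by (simp add: ginv_def g_inv_def vt_def \<rho>_def fun_eq_iff)

lemma pi_btw_eq_projP:
  assumes rep: "rep_of P = (v, \<alpha>)" and P': "P' \<in> Pset geo m j'" and j': "j' < j"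
    and W: "W \<in> Ost (j - j') (Suc m)" and Wv: "\<forall>i<j - j'. lin_eqs (Suc m) (m - j) v (\<lambda>_. 0) (W i)"
    and \<beta>: "\<forall>i\<ge>j - j'. \<beta> i = 0"
    and X: "subsphP m j' P' = {x \<in> Y. lin_eqs (Suc m) (j - j') W \<beta> x}"
    and sqn_P': "sqn (m - j') (snd (rep_of P')) = sqn (m - j) \<alpha> + sqn (j - j') \<beta>"
    and q: "inR (Suc m) q" and ok: "projP_ok m j P q" "pi_btw_ok geo m j j' P P' (projP m j P q)"
      "projP_ok m j' P' q"
  shows "pi_btw geo m j j' P P' (projP m j P q) = projP m j' P' q"
proof -
  define y where "y = proj m j (v, \<alpha>) q"
  have N: "vnorm (Suc m) (residual m (m - j) v q) \<noteq> 0"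
    using ok(1) j' by (simp add: projP_ok_def proj_ok_def rep)
  have y: "projP m j P q = y" "y \<in> Y"
    using proj_in_Y[OF q N] by (simp_all add: projP_def rep y_def)
  have image: "gmap m j P ` subsphP m j' P' = g ` subsphP m j' P'"
    using gmap_eq[OF rep] X by (auto intro: image_cong)
  have "\<exists>P''\<in>Pset geo j j'. subsphP j j' P'' = gmap m j P ` subsphP m j' P'"
    using image_lin_eqs_Pset[OF W Wv \<beta> _ rep_of_in_Pset(2)[OF P'] sqn_P'] j' X image by simp
  then have P'': "image_class geo m j j' P P' \<in> Pset geo j j'"
      "subsphP j j' (image_class geo m j j' P P') = g ` subsphP m j' P'"
    using someI_ex[of "\<lambda>P''. P'' \<in> Pset geo j j' \<and> subsphP j j' P'' = gmap m j P ` subsphP m j' P'"]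
    unfolding image_class_def image by auto
  have "pi_btw geo m j j' P P' y = g_inv (projP j j' (image_class geo m j j' P P') (g y))"
    by (simp add: pi_btw_def ginv_eq[OF rep] gmap_eq[OF rep y(2)])
  also have "\<dots> = projP m j' P' q"
    unfolding y_def
  proof (rule proj_commute[OF q N _ projP_unique_argmax[OF P' q ok(3)] P''])
    show "subsphP m j' P' \<subseteq> Y" using X by auto
    show "projP_ok j j' (image_class geo m j j' P P') (g (proj m j (v, \<alpha>) q))"
      using ok(2) y by (simp add: pi_btw_ok_def gmap_eq[OF rep] y_def[symmetric])
  qed
  finally show ?thesis using y(1) by simp
qed

end

section \<open>Nested subspheres\<close>

lemma children_lin_eqs:
  assumes P: "P \<in> Pset geo m l" and P': "P' \<in> Pset geo m (l - 1)" and C: "P' \<in> children geo m l P"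
  obtains w b where "w \<in> Sph m" "lin_eqs (Suc m) (m - l) (fst (rep_of P)) (\<lambda>_. 0) w"
    and "\<And>x. lin_eqs (Suc m) (Suc (m - l)) (fst (rep_of P')) (snd (rep_of P')) x
      \<longleftrightarrow> lin_eqs (Suc m) (m - l) (fst (rep_of P)) (snd (rep_of P)) x \<and> dot (Suc m) w x = b"
    and "sqn (Suc (m - l)) (snd (rep_of P')) = sqn (m - l) (snd (rep_of P)) + b^2"
proof -
  obtain z w b where P'_eq: "P' = orbit (Suc (m - l)) ((fst z)(m - l := w), (snd z)(m - l := b))"
    and z: "z \<in> P" and w: "w \<in> Sph m" and wz: "lin_eqs (Suc m) (m - l) (fst z) (\<lambda>_. 0) w"
    using C by (auto simp: children_def)
  define z' where "z' = ((fst z)(m - l := w), (snd z)(m - l := b))"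
  note zP = Pset_member[OF P z]
  have rep': "rep_of P' \<in> orbit (Suc (m - l)) z'"
    using rep_of_in_Pset(1)[OF P'] P'_eq by (simp add: z'_def)
  show thesis
  proof (rule that[OF w])
    show "lin_eqs (Suc m) (m - l) (fst (rep_of P)) (\<lambda>_. 0) w" using zP(4) wz by simp
  next
    fix x
    have "lin_eqs (Suc m) (Suc (m - l)) (fst (rep_of P')) (snd (rep_of P')) x
        \<longleftrightarrow> lin_eqs (Suc m) (Suc (m - l)) (fst z') (snd z') x"
      by (rule orbit_lin_eqs[OF rep'])
    also have "\<dots> \<longleftrightarrow> lin_eqs (Suc m) (m - l) (fst z) (snd z) x \<and> dot (Suc m) w x = b"
      unfolding z'_def fst_conv snd_conv by (rule lin_eqs_fun_upd)
    finally show "lin_eqs (Suc m) (Suc (m - l)) (fst (rep_of P')) (snd (rep_of P')) x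
        \<longleftrightarrow> lin_eqs (Suc m) (m - l) (fst (rep_of P)) (snd (rep_of P)) x \<and> dot (Suc m) w x = b"
      using zP(2) by simp
  next
    have "\<forall>a\<ge>Suc (m - l). snd z' a = 0" using MsetD(2)[OF zP(1)] by (simp add: z'_def)
    then show "sqn (Suc (m - l)) (snd (rep_of P')) = sqn (m - l) (snd (rep_of P)) + b^2"
      using orbit_sqn[OF rep'] zP(3) by (simp add: z'_def sqn_fun_upd)
  qed
qed

lemma nested_lin_eqs:
  assumes P: "\<forall>l<m. p l \<in> Pset geo m l"
    and C: "\<forall>l. 1 \<le> l \<and> l \<le> m - 1 \<longrightarrow> p (l - 1) \<in> children geo m l (p l)"
    and j: "j \<le> m - 1" and rep: "rep_of (p j) = (v, \<alpha>)" and t: "t \<le> j"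
  shows "\<exists>W \<beta>. W \<in> Ost t (Suc m) \<and> (\<forall>i<t. lin_eqs (Suc m) (m - j) v (\<lambda>_. 0) (W i))
    \<and> (\<forall>i\<ge>t. \<beta> i = 0)
    \<and> (\<forall>x. lin_eqs (Suc m) (m - (j - t)) (fst (rep_of (p (j - t)))) (snd (rep_of (p (j - t)))) x
          \<longleftrightarrow> lin_eqs (Suc m) (m - j) v \<alpha> x \<and> lin_eqs (Suc m) t W \<beta> x)
    \<and> sqn (m - (j - t)) (snd (rep_of (p (j - t)))) = sqn (m - j) \<alpha> + sqn t \<beta>"
  using t
proof (induction t)
  case 0
  have "(\<lambda>_ _. 0) \<in> Ost 0 (Suc m)" by (simp add: Ost_def)
  then show ?case
    using rep by (intro exI[of _ "\<lambda>_ _. 0"] exI[of _ "\<lambda>_. 0"]) (simp add: sqn_def)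
next
  case (Suc t)
  define l where "l = j - t"
  have l: "1 \<le> l" "l \<le> m - 1" "j - Suc t = l - 1" "m - (l - 1) = Suc (m - l)"
    using Suc.prems j by (auto simp: l_def)
  obtain W \<beta> where W: "W \<in> Ost t (Suc m)" and Wv: "\<forall>i<t. lin_eqs (Suc m) (m - j) v (\<lambda>_. 0) (W i)"
    and \<beta>: "\<forall>i\<ge>t. \<beta> i = 0"
    and eqs: "\<And>x. lin_eqs (Suc m) (m - l) (fst (rep_of (p l))) (snd (rep_of (p l))) x
          \<longleftrightarrow> lin_eqs (Suc m) (m - j) v \<alpha> x \<and> lin_eqs (Suc m) t W \<beta> x"
    and sqn_l: "sqn (m - l) (snd (rep_of (p l))) = sqn (m - j) \<alpha> + sqn t \<beta>"
    using Suc by (auto simp: l_def)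
  have "p l \<in> Pset geo m l" "p (l - 1) \<in> Pset geo m (l - 1)" "p (l - 1) \<in> children geo m l (p l)"
    using P C l by auto
  then obtain w b where w: "w \<in> Sph m"
    and w_perp: "lin_eqs (Suc m) (m - l) (fst (rep_of (p l))) (\<lambda>_. 0) w"
    and eqs': "\<And>x. lin_eqs (Suc m) (Suc (m - l)) (fst (rep_of (p (l - 1)))) (snd (rep_of (p (l - 1)))) x
      \<longleftrightarrow> lin_eqs (Suc m) (m - l) (fst (rep_of (p l))) (snd (rep_of (p l))) x \<and> dot (Suc m) w x = b"
    and sqn': "sqn (Suc (m - l)) (snd (rep_of (p (l - 1)))) = sqn (m - l) (snd (rep_of (p l))) + b^2"
    using children_lin_eqs by blast
  have "lin_eqs (Suc m) (m - l) (fst (rep_of (p l))) (snd (rep_of (p l)))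
      (lin (fst (rep_of (p l))) (snd (rep_of (p l))) (m - l))"
    using Ost_dot_lin[OF MsetD(1)[OF rep_of_in_Pset(2)[OF \<open>p l \<in> Pset geo m l\<close>]]] by simp
  from lin_eqs_homogeneous_iff[OF eqs this] w_perp
  have wv: "lin_eqs (Suc m) (m - j) v (\<lambda>_. 0) w" and wW: "lin_eqs (Suc m) t W (\<lambda>_. 0) w"
    by auto
  show ?case
  proof (intro exI conjI)
    show "W(t := w) \<in> Ost (Suc t) (Suc m)"
      using Ost_fun_upd[OF W _ _ wW] w by (simp add: Sph_def)
    show "\<forall>i<Suc t. lin_eqs (Suc m) (m - j) v (\<lambda>_. 0) ((W(t := w)) i)"
      using Wv wv by (simp add: less_Suc_eq)
    show "\<forall>i\<ge>Suc t. (\<beta>(t := b)) i = 0" using \<beta> by simp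
    show "\<forall>x. lin_eqs (Suc m) (m - (j - Suc t)) (fst (rep_of (p (j - Suc t))))
        (snd (rep_of (p (j - Suc t)))) x
      \<longleftrightarrow> lin_eqs (Suc m) (m - j) v \<alpha> x \<and> lin_eqs (Suc m) (Suc t) (W(t := w)) (\<beta>(t := b)) x"
      unfolding l(3,4) lin_eqs_fun_upd using eqs' eqs by blast
    show "sqn (m - (j - Suc t)) (snd (rep_of (p (j - Suc t))))
        = sqn (m - j) \<alpha> + sqn (Suc t) (\<beta>(t := b))"
      using sqn' sqn_l unfolding l(3,4) by (simp add: sqn_fun_upd)
  qed
qed

theorem proposition2p5:
  fixes geo :: bool and m j j' :: nat and p :: "nat \<Rightarrow> rep set" and q :: vec
  assumes "m \<ge> 2"
    and "\<forall>l<m. p l \<in> Pset geo m l"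
    and "p (m - 1) \<in> children_top geo m"
    and "\<forall>l. 1 \<le> l \<and> l \<le> m - 1 \<longrightarrow> p (l - 1) \<in> children geo m l (p l)"
    and "j' < j" and "j \<le> m - 1"
    and "q \<in> Sph m"
    and "projP_ok m j (p j) q"
    and "pi_btw_ok geo m j j' (p j) (p j') (projP m j (p j) q)"
    and "projP_ok m j' (p j') q"
  shows "pi_btw geo m j j' (p j) (p j') (projP m j (p j) q) = projP m j' (p j') q"
proof -
  have j: "j' < j" "j \<le> m" and P: "p j \<in> Pset geo m j" "p j' \<in> Pset geo m j'"
    using assms(1,2,5,6) by auto
  obtain v \<alpha> where rep: "rep_of (p j) = (v, \<alpha>)" by fastforce
  note M = MsetD[OF rep_of_in_Pset(2)[OF P(1)], unfolded rep fst_conv snd_conv]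
  interpret chart m j v \<alpha> using j M(1) M(4) by unfold_locales auto
  have "j - (j - j') = j'" using j by simp
  then obtain W \<beta> where W: "W \<in> Ost (j - j') (Suc m)"
    and Wv: "\<forall>i<j - j'. lin_eqs (Suc m) (m - j) v (\<lambda>_. 0) (W i)" and \<beta>: "\<forall>i\<ge>j - j'. \<beta> i = 0"
    and eqs: "\<forall>x. lin_eqs (Suc m) (m - j') (fst (rep_of (p j'))) (snd (rep_of (p j'))) x
      \<longleftrightarrow> lin_eqs (Suc m) (m - j) v \<alpha> x \<and> lin_eqs (Suc m) (j - j') W \<beta> x"
    and sqn_eq: "sqn (m - j') (snd (rep_of (p j'))) = sqn (m - j) \<alpha> + sqn (j - j') \<beta>"
    using nested_lin_eqs[OF assms(2,4,6) rep, of "j - j'"] by auto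
  have "subsphP m j' (p j') = {x \<in> Y. lin_eqs (Suc m) (j - j') W \<beta> x}"
    using subsphP_eq[OF P(2)] eqs by (auto simp: Y_def)
  then show ?thesis
    using pi_btw_eq_projP[OF rep P(2) j(1) W Wv \<beta> _ sqn_eq] assms(7-10) by (simp add: Sph_def)
qed

end
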